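(* Let $a\in[0,\infty)$ and let $t:[0,1]\to[0,\infty]$ and $s:[0,\infty]\to[0,1]$ be continuous and increasing functions such that (1) $t(x)=\frac{a}{2}$ if and only if $x=0$, and (2) the function $G_{t,s}:[0,1]^2\to[0,1]$, $G_{t,s}(x,y)=s(t(x)+t(y))$, is a grouping function. Then $s(x)=0$ if and only if $x\in[0,a]$.
   Context: "Increasing" means non-decreasing. Arithmetic in $[0,\infty]$ uses $c+\infty=\infty$; continuity on $[0,\infty]$ refers to the usual topology of the extended half-line. A grouping function is a map $G:[0,1]^2\to[0,1]$ that is (G1) commutative, (G2) $G(x,y)=0$ iff $x=y=0$, (G3) $G(x,y)=1$ iff $x=1$ or $y=1$, (G4) increasing in each variable, (G5) continuous. *)

theory Defs
  imports "HOL-Analysis.Analysis" "HOL-Library.Extended_Nonnegative_Real"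
begin

definition grouping_function :: "(real \<Rightarrow> real \<Rightarrow> real) \<Rightarrow> bool" where
  "grouping_function G \<longleftrightarrow>
     (\<forall>x\<in>{0..1}. \<forall>y\<in>{0..1}. G x y \<in> {0..1}) \<and>
     (\<forall>x\<in>{0..1}. \<forall>y\<in>{0..1}. G x y = G y x) \<and>
     (\<forall>x\<in>{0..1}. \<forall>y\<in>{0..1}. G x y = 0 \<longleftrightarrow> x = 0 \<and> y = 0) \<and>
     (\<forall>x\<in>{0..1}. \<forall>y\<in>{0..1}. G x y = 1 \<longleftrightarrow> x = 1 \<or> y = 1) \<and>
     (\<forall>x\<in>{0..1}. \<forall>x'\<in>{0..1}. \<forall>y\<in>{0..1}. x \<le> x' \<longrightarrow> G x y \<le> G x' y) \<and>
     (\<forall>x\<in>{0..1}. \<forall>y\<in>{0..1}. \<forall>y'\<in>{0..1}. y \<le> y' \<longrightarrow> G x y \<le> G x y') \<and>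
     continuous_on ({0..1} \<times> {0..1}) (\<lambda>(x, y). G x y)"

end

theory Submission
  imports Defs
begin

text \<open>The only properties of the grouping function that matter are that the diagonal value
  \<open>s (t 0 + t 0) = s a\<close> vanishes, and that the diagonal values \<open>s (t x + t x)\<close> for \<open>x > 0\<close>
  do not. Since \<open>s\<close> is increasing and nonnegative, the first gives \<open>s = 0\<close> on \<open>[0, a]\<close>.
  If \<open>s z = 0\<close> for some \<open>z > a = 2 t 0\<close>, continuity of \<open>t\<close> at \<open>0\<close> yields \<open>x > 0\<close> with
  \<open>t x + t x < z\<close>, so \<open>s (t x + t x) = 0\<close>, a contradiction.\<close>

lemma grouping_function_eq_0_iff:
  assumes "grouping_function G" "x \<in> {0..1}" "y \<in> {0..1}"
  shows "G x y = 0 \<longleftrightarrow> x = 0 \<and> y = 0"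
proof -
  have "\<forall>x\<in>{0..1}. \<forall>y\<in>{0..1}. G x y = 0 \<longleftrightarrow> x = 0 \<and> y = 0"
    using assms(1) unfolding grouping_function_def by (elim conjE) assumption
  with assms(2,3) show ?thesis by blast
qed

lemma mono_nonneg_eq_0_below:
  fixes s :: "'a::order \<Rightarrow> 'b::linordered_ab_group_add"
  assumes "mono s" "\<And>z. s z \<ge> 0" "s c = 0" "z \<le> c"
  shows "s z = 0"
  using assms monoD[OF assms(1) assms(4)] by (metis order_antisym)

lemma continuous_on_Icc_less_near_left:
  fixes f :: "real \<Rightarrow> 'b::linorder_topology"
  assumes "continuous_on {a..b} f" "a < b" "f a < z"
  shows "\<exists>x\<in>{a<..b}. f x < z"
proof -
  have "(f \<longlongrightarrow> f a) (at_right a)"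
    using assms(1,2) by (metis at_within_Icc_at_right atLeastAtMost_iff continuous_on_def order_less_imp_le order_refl)
  then have "eventually (\<lambda>x. f x < z) (at_right a)"
    using assms(3) by (rule order_tendstoD)
  moreover have "eventually (\<lambda>x. a < x \<and> x < b) (at_right a)"
    using assms(2) by (simp add: eventually_at_right_field) blast
  ultimately have "eventually (\<lambda>x. f x < z \<and> a < x \<and> x < b) (at_right a)"
    by (rule eventually_conj)
  then obtain x where "f x < z" "a < x" "x < b"
    using eventually_happens trivial_limit_at_right_real by blast
  then show ?thesis by auto
qed

theorem proposition6p2:
  fixes a :: real and t :: "real \<Rightarrow> ennreal" and s :: "ennreal \<Rightarrow> real"
  assumes a_nonneg: "a \<ge> 0"
    and t_cont: "continuous_on {0..1} t"
    and t_mono: "mono_on {0..1} t"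
    and s_range: "\<forall>z. s z \<in> {0..1}"
    and s_cont: "continuous_on UNIV s"
    and s_mono: "mono s"
    and t_zero: "\<forall>x\<in>{0..1}. t x = ennreal (a / 2) \<longleftrightarrow> x = 0"
    and grouping: "grouping_function (\<lambda>x y. s (t x + t y))"
  shows "\<forall>z. s z = 0 \<longleftrightarrow> z \<le> ennreal a"
proof
  fix z
  have s_nonneg: "\<And>z. s z \<ge> 0" using s_range by simp
  have diag_eq_0_iff: "x \<in> {0..1} \<Longrightarrow> s (t x + t x) = 0 \<longleftrightarrow> x = 0" for x
    using grouping_function_eq_0_iff[OF grouping] by blast
  have t0_twice: "t 0 + t 0 = ennreal a"
  proof -
    have "t 0 = ennreal (a / 2)" using t_zero by simp
    then show ?thesis using a_nonneg by (simp flip: ennreal_plus)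
  qed
  have sa: "s (ennreal a) = 0"
    using diag_eq_0_iff[of 0] t0_twice by simp
  show "s z = 0 \<longleftrightarrow> z \<le> ennreal a"
  proof
    assume "s z = 0"
    show "z \<le> ennreal a"
    proof (rule ccontr)
      assume "\<not> z \<le> ennreal a"
      then have "t 0 + t 0 < z" using t0_twice by simp
      moreover have "continuous_on {0..1} (\<lambda>x. t x + t x)"
        using t_cont by (intro continuous_on_add)
      ultimately obtain x where x: "x \<in> {0<..1}" "t x + t x < z"
        using continuous_on_Icc_less_near_left[of 0 1 "\<lambda>x. t x + t x" z] by auto
      then have "s (t x + t x) = 0"
        using mono_nonneg_eq_0_below[OF s_mono s_nonneg \<open>s z = 0\<close>] by simp
      moreover have "x \<in> {0..1}" "x \<noteq> 0" using x(1) by auto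
      ultimately show False using diag_eq_0_iff by blast
    qed
  next
    assume "z \<le> ennreal a"
    then show "s z = 0" by (rule mono_nonneg_eq_0_below[OF s_mono s_nonneg sa])
  qed
qed

end
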